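(* Let $\theta>1$ and $r\in(\theta^{-1},\theta^{-1/2}]$. Let $\mathsf{A}$ be any deterministic online algorithm for one-max search with predictions having robustness $r$ and consistency $\frac1{r\theta}$. Suppose there is $u\in\mathbb{R}$ such that for all $n\ge1$, all $p\in[1,\theta]^n$ with maximum $p^*$ and all $y\in[1,\theta]$, \[ \frac{\mathsf{A}(p,y)}{p^*}\ge\max\Big(r,\ \frac{1}{r\theta}\,\mathcal{E}(p^*,y)^{u}\Big). \] Then $u\ge \frac{\ln\theta}{\ln(r\theta)}-2$.
   Context: One-max search: fix $\theta>1$. An instance is a sequence of prices $p=(p_1,\dots,p_n)\in[1,\theta]^n$, revealed one at a time; the algorithm receives at the start a prediction $y\in[1,\theta]$ of $p^*:=\max_ip_i$. At each step it irrevocably accepts the current price (payoff = that price) or rejects it; if nothing is accepted by step $n$ the payoff is $1$. $\mathsf{A}(p,y)$ is the payoff. Consistency: $\inf_p \mathsf{A}(p,p^* )/p^*$; robustness: $\inf_{p,y}\mathsf{A}(p,y)/p^*$. The multiplicative error is $\mathcal{E}(p^*,y)=\min\{p^*/y,\,y/p^*\}$. *)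

theory Defs
  imports Complex_Main
begin

text \<open>A deterministic online algorithm for one-max search (for a fixed \<theta>):
  on prediction y and the prefix of prices revealed so far (the last element
  being the current price), it decides whether to accept the current price.
  It does not know the horizon n in advance.\<close>
type_synonym alg = "real \<Rightarrow> real list \<Rightarrow> bool"

fun run :: "alg \<Rightarrow> real \<Rightarrow> real list \<Rightarrow> real list \<Rightarrow> real" where
  "run A y past [] = 1"
| "run A y past (x # xs) =
     (if A y (past @ [x]) then x else run A y (past @ [x]) xs)"

definition payoff :: "alg \<Rightarrow> real list \<Rightarrow> real \<Rightarrow> real" where
  "payoff A p y = run A y [] p"

definition instances :: "real \<Rightarrow> real list set" where
  "instances \<theta> = {p. p \<noteq> [] \<and> (\<forall>x\<in>set p. 1 \<le> x \<and> x \<le> \<theta>)}"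

definition pmax :: "real list \<Rightarrow> real" where
  "pmax p = Max (set p)"

definition consistency :: "real \<Rightarrow> alg \<Rightarrow> real" where
  "consistency \<theta> A = (INF p \<in> instances \<theta>. payoff A p (pmax p) / pmax p)"

definition robustness :: "real \<Rightarrow> alg \<Rightarrow> real" where
  "robustness \<theta> A =
     (INF py \<in> instances \<theta> \<times> {1..\<theta>}. payoff A (fst py) (snd py) / pmax (fst py))"

definition mult_err :: "real \<Rightarrow> real \<Rightarrow> real" where
  "mult_err ps y = min (ps / y) (y / ps)"

end

theory Submission
  imports Defs
begin

text \<open>Take the prediction \<open>y = \<theta>\<close> and a first price \<open>x < 1/r\<close>. Accepting \<open>x\<close> is fatal
  on the instance \<open>[x, \<theta>]\<close>, whose prediction is correct, because the ratio \<open>x/\<theta>\<close> is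
  below the consistency \<open>1/(r\<theta>)\<close>. So \<open>x\<close> is rejected, and on the instance \<open>[x]\<close> the
  payoff is \<open>1\<close> while the error is \<open>x/\<theta>\<close>; the assumed bound then reads
  \<open>x (x/\<theta>)\<^sup>u \<le> r\<theta>\<close>. Letting \<open>x \<rightarrow> 1/r\<close> gives \<open>(r\<theta>)\<^sup>-\<^sup>u \<le> r\<^sup>2\<theta>\<close>, which is the claim
  after taking logarithms.\<close>

lemma run_ge_one:
  assumes "\<forall>x\<in>set p. 1 \<le> x"
  shows "run A y past p \<ge> 1"
  using assms by (induction p arbitrary: past) auto

lemma payoff_ge_one: "p \<in> instances \<theta> \<Longrightarrow> payoff A p y \<ge> 1"
  unfolding payoff_def instances_def by (auto intro: run_ge_one)

lemma pmax_ge_one: "p \<in> instances \<theta> \<Longrightarrow> pmax p \<ge> 1"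
  unfolding instances_def pmax_def by (auto intro: Max_ge_iff[THEN iffD2])

lemma consistency_le:
  assumes "p \<in> instances \<theta>"
  shows "consistency \<theta> A \<le> payoff A p (pmax p) / pmax p"
  unfolding consistency_def
proof (rule cINF_lower[OF _ assms])
  have "payoff A q (pmax q) / pmax q \<ge> 0" if "q \<in> instances \<theta>" for q
    using payoff_ge_one[OF that, of A "pmax q"] pmax_ge_one[OF that] by simp
  then show "bdd_below ((\<lambda>q. payoff A q (pmax q) / pmax q) ` instances \<theta>)"
    by (rule bdd_belowI2)
qed

lemma rejects_below_consistency:
  assumes "1 \<le> x" "x \<le> \<theta>" "x < consistency \<theta> A * \<theta>"
  shows "\<not> A \<theta> [x]"
proof
  assume accept: "A \<theta> [x]"
  have "[x, \<theta>] \<in> instances \<theta>" and "pmax [x, \<theta>] = \<theta>"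
    using assms(1,2) by (auto simp: instances_def pmax_def)
  with consistency_le have "consistency \<theta> A \<le> payoff A [x, \<theta>] \<theta> / \<theta>"
    by metis
  also have "\<dots> = x / \<theta>"
    using accept by (simp add: payoff_def)
  finally show False
    using assms by (simp add: field_simps)
qed

lemma mult_err_of_le:
  assumes "0 < x" "x \<le> y"
  shows "mult_err x y = x / y"
proof -
  have "x / y \<le> 1" "1 \<le> y / x"
    using assms by simp_all
  then show ?thesis
    unfolding mult_err_def by simp
qed

lemma rejected_price_bound:
  assumes bound: "\<forall>p\<in>instances \<theta>. \<forall>y\<in>{1..\<theta>}. c * mult_err (pmax p) y powr u \<le> payoff A p y / pmax p"
    and "c > 0" "1 \<le> x" "x \<le> \<theta>" "\<not> A \<theta> [x]"
  shows "x * (x / \<theta>) powr u \<le> 1 / c"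
proof -
  have "[x] \<in> instances \<theta>"
    using assms(3,4) by (simp add: instances_def)
  with bound assms(3,4) have "c * mult_err (pmax [x]) \<theta> powr u \<le> payoff A [x] \<theta> / pmax [x]"
    by simp
  then have "c * (x / \<theta>) powr u \<le> 1 / x"
    using assms(3-5) by (simp add: pmax_def payoff_def mult_err_of_le)
  then show ?thesis
    using assms(2,3) by (simp add: field_simps)
qed

lemma exponent_bound_from_limit:
  fixes \<theta> r u :: real
  assumes "0 < r" "r < 1" "1 < r * \<theta>"
    and bound: "\<forall>x\<in>{1<..<1/r}. x * (x / \<theta>) powr u \<le> r * \<theta>"
  shows "u \<ge> ln \<theta> / ln (r * \<theta>) - 2"
proof -
  have pos: "\<theta> > 0" "1 < 1 / r"
    using assms(1-3) zero_less_mult_pos[of r \<theta>] by simp_all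
  define f where "f x = x * (x / \<theta>) powr u" for x
  have "(f \<longlongrightarrow> f (1/r)) (at_left (1/r))"
    unfolding f_def using pos assms(1)
    by (intro tendsto_intros) auto
  moreover have "eventually (\<lambda>x. f x \<le> r * \<theta>) (at_left (1/r))"
    using eventually_at_left_real[OF \<open>1 < 1/r\<close>] by eventually_elim (use bound f_def in auto)
  ultimately have "f (1/r) \<le> r * \<theta>"
    by (rule tendsto_upperbound) simp
  then have "ln (f (1/r)) \<le> ln (r * \<theta>)"
    using pos assms(1) by (simp add: f_def)
  then have "- ln r - u * ln (r * \<theta>) \<le> ln (r * \<theta>)"
    using pos assms(1) by (simp add: f_def ln_mult ln_powr ln_div algebra_simps)
  then have "ln \<theta> - 2 * ln (r * \<theta>) \<le> u * ln (r * \<theta>)"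
    using pos assms(1) by (simp add: ln_mult)
  then show ?thesis
    using assms(3) by (simp add: field_simps)
qed

theorem theorem3:
  fixes \<theta> r u :: real and A :: alg
  assumes "\<theta> > 1"
    and "1 / \<theta> < r" and "r \<le> 1 / sqrt \<theta>"
    and "robustness \<theta> A \<ge> r"
    and "consistency \<theta> A \<ge> 1 / (r * \<theta>)"
    and "\<forall>p \<in> instances \<theta>. \<forall>y \<in> {1..\<theta>}.
           payoff A p y / pmax p \<ge>
             max r ((1 / (r * \<theta>)) * mult_err (pmax p) y powr u)"
  shows "u \<ge> ln \<theta> / ln (r * \<theta>) - 2"
proof -
  have "r > 0"
    using assms(1,2) by (smt (verit) divide_pos_pos)
  moreover have "r < 1"
    using assms(1,3) le_less_trans[of r "1 / sqrt \<theta>" 1] by simp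
  ultimately have r: "r > 0" "r < 1" "1 < r * \<theta>" "1 / r < \<theta>"
    using assms(1,2) by (auto simp: field_simps)
  have "1 / r \<le> consistency \<theta> A * \<theta>"
    using mult_right_mono[OF assms(5), of \<theta>] assms(1) by simp
  then have "\<not> A \<theta> [x]" if "x \<in> {1<..<1/r}" for x
    using that r by (intro rejects_below_consistency) auto
  moreover have "\<forall>p\<in>instances \<theta>. \<forall>y\<in>{1..\<theta>}.
      1 / (r * \<theta>) * mult_err (pmax p) y powr u \<le> payoff A p y / pmax p"
    using assms(6) by (meson max.boundedE)
  ultimately have "\<forall>x\<in>{1<..<1/r}. x * (x / \<theta>) powr u \<le> r * \<theta>"
    using r rejected_price_bound[of \<theta> "1 / (r * \<theta>)" u A] by auto
  then show ?thesis
    using r exponent_bound_from_limit by blast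
qed

end
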